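(* The price of anarchy (supremum over all weights $w_1,w_2\ge0$ with $w_1+w_2>0$ and all instances, with respect to subgame-perfect equilibria) for sequential two-player weighted congestion games with affine costs and uniform cost functions is equal to $2$.
   Context: A weighted two-player congestion game with affine costs consists of a finite set $R$ of resources, coefficients $\alpha_r,\beta_r \geq 0$ for each $r\in R$, two players $i=1,2$ with weights $w_i\ge 0$, and for each player $i$ a nonempty finite set $\mathcal{A}_i \subseteq 2^R$ of actions. For an action profile $A=(A_1,A_2)$ the load of $r$ is $x_r(A)=\sum_{j:\, r\in A_j} w_j$. With uniform costs, player $i$ pays $C_i(A)=\sum_{r\in A_i}(\alpha_r+\beta_r x_r(A))$. The social cost is $C(A)=C_1(A)+C_2(A)$. In the sequential game, player 1 chooses $A_1$ first, then player 2, knowing $A_1$, chooses $A_2$. A subgame-perfect equilibrium consists of a function $A_1\mapsto A_2^*(A_1)$ with $C_2(A_1,A_2^*(A_1))\le C_2(A_1,A_2)$ for all $A_1,A_2$, and an action $A_1^*$ with $C_1(A_1^*,A_2^*(A_1^* ))\le C_1(A_1,A_2^*(A_1))$ for all $A_1$; its outcome is $(A_1^*,A_2^*(A_1^* ))$. The price of anarchy of an instance is the maximum over subgame-perfect equilibrium outcomes $A$ of $C(A)/\min_{A'}C(A')$; the price of anarchy of a class is the supremum over all instances (with positive optimal social cost). *)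

theory Defs
  imports "HOL-Library.Extended_Real"
begin

text \<open>A weighted two-player congestion game with affine, uniform costs.
  Resources are natural numbers (any finite resource set can be relabelled).\<close>

record game =
  res   :: "nat set"
  alpha :: "nat \<Rightarrow> real"
  beta  :: "nat \<Rightarrow> real"
  wt1   :: real
  wt2   :: real
  acts1 :: "nat set set"
  acts2 :: "nat set set"

definition valid_game :: "game \<Rightarrow> bool" where
  "valid_game G \<longleftrightarrow>
     finite (res G) \<and>
     (\<forall>r\<in>res G. alpha G r \<ge> 0 \<and> beta G r \<ge> 0) \<and>
     wt1 G \<ge> 0 \<and> wt2 G \<ge> 0 \<and> wt1 G + wt2 G > 0 \<and>
     finite (acts1 G) \<and> acts1 G \<noteq> {} \<and> (\<forall>A\<in>acts1 G. A \<subseteq> res G) \<and>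
     finite (acts2 G) \<and> acts2 G \<noteq> {} \<and> (\<forall>A\<in>acts2 G. A \<subseteq> res G)"

definition load :: "game \<Rightarrow> nat set \<Rightarrow> nat set \<Rightarrow> nat \<Rightarrow> real" where
  "load G A1 A2 r = (if r \<in> A1 then wt1 G else 0) + (if r \<in> A2 then wt2 G else 0)"

definition cost1 :: "game \<Rightarrow> nat set \<Rightarrow> nat set \<Rightarrow> real" where
  "cost1 G A1 A2 = (\<Sum>r\<in>A1. alpha G r + beta G r * load G A1 A2 r)"

definition cost2 :: "game \<Rightarrow> nat set \<Rightarrow> nat set \<Rightarrow> real" where
  "cost2 G A1 A2 = (\<Sum>r\<in>A2. alpha G r + beta G r * load G A1 A2 r)"

definition social_cost :: "game \<Rightarrow> nat set \<Rightarrow> nat set \<Rightarrow> real" where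
  "social_cost G A1 A2 = cost1 G A1 A2 + cost2 G A1 A2"

definition opt_cost :: "game \<Rightarrow> real" where
  "opt_cost G = Min ((\<lambda>(A1, A2). social_cost G A1 A2) ` (acts1 G \<times> acts2 G))"

text \<open>Subgame-perfect equilibrium of the sequential game: a strategy
  \<open>f\<close> of player 2 (response to each action of player 1) and an action
  \<open>a1\<close> of player 1.\<close>

definition is_SPE :: "game \<Rightarrow> (nat set \<Rightarrow> nat set) \<Rightarrow> nat set \<Rightarrow> bool" where
  "is_SPE G f a1 \<longleftrightarrow>
     (\<forall>A1\<in>acts1 G. f A1 \<in> acts2 G \<and> (\<forall>A2\<in>acts2 G. cost2 G A1 (f A1) \<le> cost2 G A1 A2)) \<and>
     a1 \<in> acts1 G \<and>
     (\<forall>A1\<in>acts1 G. cost1 G a1 (f a1) \<le> cost1 G A1 (f A1))"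

definition SPE_outcomes :: "game \<Rightarrow> (nat set \<times> nat set) set" where
  "SPE_outcomes G = {(a1, f a1) | a1 f. is_SPE G f a1}"

definition PoA_instance :: "game \<Rightarrow> ereal" where
  "PoA_instance G = (SUP p \<in> SPE_outcomes G. ereal (social_cost G (fst p) (snd p) / opt_cost G))"

definition PoA_class :: ereal where
  "PoA_class = (SUP G \<in> {G. valid_game G \<and> opt_cost G > 0}. PoA_instance G)"

end

theory Submission
  imports Defs
begin

text \<open>Let \<open>(A\<^sub>1, f A\<^sub>1)\<close> be an SPE outcome, \<open>(O\<^sub>1, O\<^sub>2)\<close> an optimal profile and
  \<open>B = f O\<^sub>1\<close> the follower's reply to \<open>O\<^sub>1\<close>. The leader's optimality gives
  \<open>C\<^sub>1(A\<^sub>1, f A\<^sub>1) \<le> C\<^sub>1(O\<^sub>1, B)\<close>, the follower's gives \<open>C\<^sub>2(A\<^sub>1, f A\<^sub>1) \<le> C\<^sub>2(A\<^sub>1, B)\<close>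
  and \<open>C\<^sub>2(O\<^sub>1, B) \<le> C\<^sub>2(O\<^sub>1, O\<^sub>2)\<close>. It remains to bound \<open>C\<^sub>2(A\<^sub>1, B) + C\<^sub>1(O\<^sub>1, B)\<close>
  resource by resource, using that a load \<open>w\<^sub>1 + w\<^sub>2\<close> is at most twice the larger weight.
  If the leader is the heavier player, the resource-wise bound only holds with an extra
  \<open>C\<^sub>1(O\<^sub>1, B)\<close> on the left and \<open>C\<^sub>1(A\<^sub>1, f A\<^sub>1)\<close> on the right, which is harmless by the
  leader's optimality.

  The bound is attained by a leader who is indifferent between a constant-cost resource and
  the resource a weightless follower must use: choosing the latter makes the follower pay as
  much as the leader.\<close>

definition share :: "game \<Rightarrow> nat set \<Rightarrow> nat set \<Rightarrow> nat set \<Rightarrow> nat \<Rightarrow> real" where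
  "share G A1 A2 A r = (if r \<in> A then alpha G r + beta G r * load G A1 A2 r else 0)"

lemma sum_share_eq:
  assumes "finite R" "A \<subseteq> R"
  shows "(\<Sum>r\<in>R. share G A1 A2 A r) = (\<Sum>r\<in>A. alpha G r + beta G r * load G A1 A2 r)"
  using sum.inter_restrict[OF assms(1), of "\<lambda>r. alpha G r + beta G r * load G A1 A2 r" A] assms(2)
  by (simp add: share_def Int_absorb1)

lemma cost1_eq_sum_share:
  assumes "valid_game G" "A1 \<in> acts1 G"
  shows "cost1 G A1 A2 = (\<Sum>r\<in>res G. share G A1 A2 A1 r)"
  using assms by (simp add: cost1_def sum_share_eq valid_game_def)

lemma cost2_eq_sum_share:
  assumes "valid_game G" "A2 \<in> acts2 G"
  shows "cost2 G A1 A2 = (\<Sum>r\<in>res G. share G A1 A2 A2 r)"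
  using assms by (simp add: cost2_def sum_share_eq valid_game_def)

lemma share_le_light_leader:
  assumes "valid_game G" "wt1 G \<le> wt2 G" "r \<in> res G"
  shows "share G A1 B B r + share G O1 B O1 r \<le> 2 * share G O1 O2 O1 r + 2 * share G O1 B B r"
proof -
  have "alpha G r \<ge> 0" "beta G r \<ge> 0" "wt1 G \<ge> 0" "wt2 G \<ge> 0"
    using assms(1,3) by (auto simp: valid_game_def)
  then have "beta G r * wt1 G \<ge> 0" "beta G r * wt2 G \<ge> 0"
    and "beta G r * wt1 G \<le> beta G r * wt2 G"
    using assms(2) by (simp_all add: mult_left_mono)
  with \<open>alpha G r \<ge> 0\<close> show ?thesis
    by (auto simp: share_def load_def algebra_simps)
qed

lemma share_le_heavy_leader:
  assumes "valid_game G" "wt2 G \<le> wt1 G" "r \<in> res G"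
  shows "share G A1 B B r + 2 * share G O1 B O1 r
    \<le> 2 * share G O1 O2 O1 r + 2 * share G O1 B B r + share G A1 A2 A1 r"
proof -
  have "alpha G r \<ge> 0" "beta G r \<ge> 0" "wt1 G \<ge> 0" "wt2 G \<ge> 0"
    using assms(1,3) by (auto simp: valid_game_def)
  then have "beta G r * wt1 G \<ge> 0" "beta G r * wt2 G \<ge> 0"
    and "beta G r * wt2 G \<le> beta G r * wt1 G"
    using assms(2) by (simp_all add: mult_left_mono)
  with \<open>alpha G r \<ge> 0\<close> show ?thesis
    by (auto simp: share_def load_def algebra_simps)
qed

lemma cost_le_light_leader:
  assumes "valid_game G" "wt1 G \<le> wt2 G" "O1 \<in> acts1 G" "B \<in> acts2 G"
  shows "cost2 G A1 B + cost1 G O1 B \<le> 2 * cost1 G O1 O2 + 2 * cost2 G O1 B"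
  using sum_mono[of "res G", OF share_le_light_leader[OF assms(1,2)]] assms
  by (simp add: cost1_eq_sum_share cost2_eq_sum_share sum.distrib sum_distrib_left)

lemma cost_le_heavy_leader:
  assumes "valid_game G" "wt2 G \<le> wt1 G" "A1 \<in> acts1 G" "O1 \<in> acts1 G" "B \<in> acts2 G"
  shows "cost2 G A1 B + 2 * cost1 G O1 B \<le> 2 * cost1 G O1 O2 + 2 * cost2 G O1 B + cost1 G A1 A2"
  using sum_mono[of "res G", OF share_le_heavy_leader[OF assms(1,2)]] assms
  by (simp add: cost1_eq_sum_share cost2_eq_sum_share sum.distrib sum_distrib_left)

lemma SPE_social_cost_le_twice:
  assumes V: "valid_game G" and E: "is_SPE G f A1" and O: "O1 \<in> acts1 G" "O2 \<in> acts2 G"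
  shows "social_cost G A1 (f A1) \<le> 2 * social_cost G O1 O2"
proof -
  have A1: "A1 \<in> acts1 G" and B: "f O1 \<in> acts2 G"
    using E O by (auto simp: is_SPE_def)
  have leader: "cost1 G A1 (f A1) \<le> cost1 G O1 (f O1)"
    and follower: "cost2 G A1 (f A1) \<le> cost2 G A1 (f O1)"
    and follower_opt: "cost2 G O1 (f O1) \<le> cost2 G O1 O2"
    using E O A1 B unfolding is_SPE_def by blast+
  consider (light) "wt1 G \<le> wt2 G" | (heavy) "wt2 G \<le> wt1 G" by linarith
  then show ?thesis
  proof cases
    case light
    with cost_le_light_leader[OF V light O(1) B, of A1 O2] leader follower follower_opt show ?thesis
      by (simp add: social_cost_def)
  next
    case heavy
    with cost_le_heavy_leader[OF V heavy A1 O(1) B, of O2 "f A1"] leader follower follower_opt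
    show ?thesis
      by (simp add: social_cost_def)
  qed
qed

lemma opt_cost_attained:
  assumes "valid_game G"
  obtains O1 O2 where "O1 \<in> acts1 G" "O2 \<in> acts2 G" "opt_cost G = social_cost G O1 O2"
proof -
  let ?S = "(\<lambda>(A1, A2). social_cost G A1 A2) ` (acts1 G \<times> acts2 G)"
  have "finite ?S" "?S \<noteq> {}"
    using assms by (auto simp: valid_game_def)
  then have "opt_cost G \<in> ?S"
    unfolding opt_cost_def by (rule Min_in)
  with that show ?thesis by auto
qed

lemma PoA_instance_le_two:
  assumes V: "valid_game G" and pos: "opt_cost G > 0"
  shows "PoA_instance G \<le> 2"
  unfolding PoA_instance_def
proof (rule SUP_least)
  fix p assume "p \<in> SPE_outcomes G"
  then obtain A1 f where p: "p = (A1, f A1)" and E: "is_SPE G f A1"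
    unfolding SPE_outcomes_def by blast
  obtain O1 O2 where "O1 \<in> acts1 G" "O2 \<in> acts2 G" "opt_cost G = social_cost G O1 O2"
    using V by (rule opt_cost_attained)
  with SPE_social_cost_le_twice[OF V E] have "social_cost G A1 (f A1) \<le> 2 * opt_cost G"
    by simp
  with pos p show "ereal (social_cost G (fst p) (snd p) / opt_cost G) \<le> 2"
    by (simp add: divide_le_eq)
qed

definition tight_game :: game where
  "tight_game = \<lparr>res = {0, 1}, alpha = (\<lambda>r. if r = 0 then 1 else 0),
     beta = (\<lambda>r. if r = 1 then 1 else 0), wt1 = 1, wt2 = 0,
     acts1 = {{0}, {1}}, acts2 = {{1}}\<rparr>"

lemma valid_tight_game: "valid_game tight_game"
  by (auto simp: valid_game_def tight_game_def)

lemma social_cost_tight_game: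
  "social_cost tight_game {0} {1} = 1" "social_cost tight_game {1} {1} = 2"
  by (simp_all add: tight_game_def social_cost_def cost1_def cost2_def load_def)

lemma opt_cost_tight_game: "opt_cost tight_game = 1"
proof -
  have "(\<lambda>(A1, A2). social_cost tight_game A1 A2) ` (acts1 tight_game \<times> acts2 tight_game) = {1, 2}"
    using social_cost_tight_game by (auto simp: tight_game_def)
  then show ?thesis
    by (simp add: opt_cost_def)
qed

lemma is_SPE_tight_game: "is_SPE tight_game (\<lambda>_. {1}) {1}"
  by (simp add: is_SPE_def tight_game_def cost1_def cost2_def load_def)

lemma PoA_instance_tight_game: "PoA_instance tight_game \<ge> 2"
proof -
  have "({1}, {1}) \<in> SPE_outcomes tight_game"
    using is_SPE_tight_game unfolding SPE_outcomes_def by force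
  then have "ereal (social_cost tight_game {1} {1} / opt_cost tight_game) \<le> PoA_instance tight_game"
    unfolding PoA_instance_def by (rule SUP_upper2) simp_all
  then show ?thesis
    unfolding social_cost_tight_game opt_cost_tight_game by simp
qed

theorem corollary5:
  shows "PoA_class = 2"
proof (rule antisym)
  show "PoA_class \<le> 2"
    unfolding PoA_class_def by (rule SUP_least) (blast intro: PoA_instance_le_two)
  have "tight_game \<in> {G. valid_game G \<and> opt_cost G > 0}"
    by (simp add: valid_tight_game opt_cost_tight_game)
  then have "PoA_instance tight_game \<le> PoA_class"
    unfolding PoA_class_def by (rule SUP_upper)
  with PoA_instance_tight_game show "2 \<le> PoA_class"
    by simp
qed

end
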